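(* Let $(A_i,\omega_i)$, $i=1,2$, be commutative baric algebras over $K$ and let $I$ be a two-sided ideal of $A_1\bowtie A_2$ with $I\subseteq\operatorname{Ker}(\omega_1\bowtie\omega_2)$. Then $I_1=A_1$ if and only if $I=\operatorname{Ker}(\omega_1\bowtie\omega_2)$.
   Context: A baric algebra over a field $K$ is a pair $(A,\omega)$ where $A$ is a (not necessarily associative) $K$-algebra and $\omega:A\to K$ is a nonzero $K$-algebra homomorphism. For baric algebras $(A_1,\omega_1),(A_2,\omega_2)$, $A_1\bowtie A_2$ denotes the vector space $A_1\oplus A_2$ with product $(a_1,a_2)(b_1,b_2)=(a_1b_1+\omega_2(b_2)a_1,\ a_2b_2+\omega_1(b_1)a_2)$, and $\omega_1\bowtie\omega_2(a_1,a_2)=\omega_1(a_1)+\omega_2(a_2)$. For $I\subseteq A_1\bowtie A_2$, $I_1=\{a_1\in A_1:\exists a_2\in A_2,\ (a_1,a_2)\in I\}$. *)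

theory Defs
  imports Main "HOL.Vector_Spaces" "HOL-Library.Product_Plus"
begin

definition nonassoc_algebra ::
  "('k::field \<Rightarrow> 'v::ab_group_add \<Rightarrow> 'v) \<Rightarrow> ('v \<Rightarrow> 'v \<Rightarrow> 'v) \<Rightarrow> bool" where
  "nonassoc_algebra sc m \<longleftrightarrow>
     vector_space sc \<and>
     (\<forall>x y z. m (x + y) z = m x z + m y z) \<and>
     (\<forall>x y z. m x (y + z) = m x y + m x z) \<and>
     (\<forall>c x y. m (sc c x) y = sc c (m x y)) \<and>
     (\<forall>c x y. m x (sc c y) = sc c (m x y))"

definition commutative_alg :: "('v \<Rightarrow> 'v \<Rightarrow> 'v) \<Rightarrow> bool" where
  "commutative_alg m \<longleftrightarrow> (\<forall>x y. m x y = m y x)"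

definition baric_algebra ::
  "('k::field \<Rightarrow> 'v::ab_group_add \<Rightarrow> 'v) \<Rightarrow> ('v \<Rightarrow> 'v \<Rightarrow> 'v) \<Rightarrow> ('v \<Rightarrow> 'k) \<Rightarrow> bool" where
  "baric_algebra sc m \<omega> \<longleftrightarrow>
     nonassoc_algebra sc m \<and>
     (\<forall>x y. \<omega> (x + y) = \<omega> x + \<omega> y) \<and>
     (\<forall>c x. \<omega> (sc c x) = c * \<omega> x) \<and>
     (\<forall>x y. \<omega> (m x y) = \<omega> x * \<omega> y) \<and>
     (\<exists>x. \<omega> x \<noteq> 0)"

definition two_sided_ideal ::
  "('k::field \<Rightarrow> 'v::ab_group_add \<Rightarrow> 'v) \<Rightarrow> ('v \<Rightarrow> 'v \<Rightarrow> 'v) \<Rightarrow> 'v set \<Rightarrow> bool" where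
  "two_sided_ideal sc m I \<longleftrightarrow>
     0 \<in> I \<and> (\<forall>x\<in>I. \<forall>y\<in>I. x + y \<in> I) \<and> (\<forall>c. \<forall>x\<in>I. sc c x \<in> I) \<and>
     (\<forall>x\<in>I. \<forall>a. m a x \<in> I \<and> m x a \<in> I)"

definition bowtie_scale ::
  "('k \<Rightarrow> 'a \<Rightarrow> 'a) \<Rightarrow> ('k \<Rightarrow> 'b \<Rightarrow> 'b) \<Rightarrow> 'k \<Rightarrow> 'a \<times> 'b \<Rightarrow> 'a \<times> 'b" where
  "bowtie_scale sc1 sc2 c p = (sc1 c (fst p), sc2 c (snd p))"

definition bowtie_mult ::
  "('k \<Rightarrow> 'a \<Rightarrow> 'a) \<Rightarrow> ('k \<Rightarrow> 'b \<Rightarrow> 'b) \<Rightarrow> ('a \<Rightarrow> 'a \<Rightarrow> 'a) \<Rightarrow> ('b \<Rightarrow> 'b \<Rightarrow> 'b)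
    \<Rightarrow> ('a \<Rightarrow> 'k) \<Rightarrow> ('b \<Rightarrow> 'k) \<Rightarrow> 'a \<times> 'b \<Rightarrow> 'a \<times> 'b \<Rightarrow> ('a::plus) \<times> ('b::plus)" where
  "bowtie_mult sc1 sc2 m1 m2 \<omega>1 \<omega>2 p q =
     (m1 (fst p) (fst q) + sc1 (\<omega>2 (snd q)) (fst p),
      m2 (snd p) (snd q) + sc2 (\<omega>1 (fst q)) (snd p))"

definition bowtie_weight :: "('a \<Rightarrow> 'k) \<Rightarrow> ('b \<Rightarrow> 'k) \<Rightarrow> 'a \<times> 'b \<Rightarrow> 'k::plus" where
  "bowtie_weight \<omega>1 \<omega>2 p = \<omega>1 (fst p) + \<omega>2 (snd p)"

text \<open>I_1 = first projection of I.\<close>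
definition proj1 :: "('a \<times> 'b) set \<Rightarrow> 'a set" where
  "proj1 I = {a1. \<exists>a2. (a1, a2) \<in> I}"

end

theory Submission
  imports Defs
begin

text \<open>
  Write \<open>\<omega> = \<omega>1 \<bowtie> \<omega>2\<close> and pick \<open>a1 \<in> A1\<close> of weight 1.
  If \<open>I1 = A1\<close>, some \<open>(a1, a2)\<close> lies in \<open>I\<close>; since \<open>I \<subseteq> Ker \<omega>\<close>, \<open>\<omega>2 a2 = -1\<close>.
  Multiplying by \<open>(a1, a2)\<close> on both sides and using commutativity, every
  \<open>(c, 0)\<close> with \<open>\<omega>1 c = 0\<close> and every \<open>(0, c)\<close> with \<open>\<omega>2 c = 0\<close> lies in \<open>I\<close>.
  Any \<open>(x1, x2) \<in> Ker \<omega>\<close> splits as \<open>k \<cdot> (a1, a2) + (x1 - k a1, 0) + (0, x2 - k a2)\<close>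
  with \<open>k = \<omega>1 x1\<close>, so \<open>Ker \<omega> \<subseteq> I\<close>.  Conversely \<open>Ker \<omega>\<close> projects onto \<open>A1\<close>
  because \<open>\<omega>2\<close> is surjective.
\<close>

lemma nonassoc_algebra_mult_zero:
  assumes "nonassoc_algebra sc m"
  shows "m x 0 = 0" and "m 0 x = 0"
proof -
  have "m x 0 = m x 0 + m x 0" and "m 0 x = m 0 x + m 0 x"
    using assms unfolding nonassoc_algebra_def by (metis add.right_neutral)+
  then show "m x 0 = 0" and "m 0 x = 0" by simp_all
qed

lemma nonassoc_algebra_module:
  assumes "nonassoc_algebra sc m"
  shows "module sc"
  using assms unfolding nonassoc_algebra_def vector_space_def module_def by auto

lemma baric_weight_diff:
  assumes "baric_algebra sc m \<omega>"
  shows "\<omega> (x - y) = \<omega> x - \<omega> y"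
proof -
  have "\<omega> (x - y) + \<omega> y = \<omega> x"
    using assms unfolding baric_algebra_def by (metis diff_add_cancel)
  then show ?thesis by (simp add: eq_diff_eq)
qed

lemma baric_weight_surj:
  fixes sc :: "'k::field \<Rightarrow> 'v::ab_group_add \<Rightarrow> 'v"
  assumes "baric_algebra sc m \<omega>"
  obtains x where "\<omega> x = k"
proof -
  obtain e where e: "\<omega> e \<noteq> 0" using assms unfolding baric_algebra_def by blast
  have "\<omega> (sc (k / \<omega> e) e) = k"
    using assms e unfolding baric_algebra_def by simp
  then show thesis by (rule that)
qed

lemma two_sided_ideal_diff:
  assumes "two_sided_ideal sc m I" and "\<And>x. sc (-1) x = - x"
    and "x \<in> I" and "y \<in> I"
  shows "x - y \<in> I"
proof -
  have "- y \<in> I" using assms(1,4) assms(2)[of y] unfolding two_sided_ideal_def by metis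
  then show ?thesis using assms(1,3) unfolding two_sided_ideal_def diff_conv_add_uminus by blast
qed

locale bowtie_ideal =
  fixes sc1 :: "'k::field \<Rightarrow> 'a::ab_group_add \<Rightarrow> 'a"
    and sc2 :: "'k \<Rightarrow> 'b::ab_group_add \<Rightarrow> 'b"
    and m1 :: "'a \<Rightarrow> 'a \<Rightarrow> 'a" and m2 :: "'b \<Rightarrow> 'b \<Rightarrow> 'b"
    and \<omega>1 :: "'a \<Rightarrow> 'k" and \<omega>2 :: "'b \<Rightarrow> 'k"
    and I :: "('a \<times> 'b) set"
  assumes baric1: "baric_algebra sc1 m1 \<omega>1"
    and baric2: "baric_algebra sc2 m2 \<omega>2"
    and ideal: "two_sided_ideal (bowtie_scale sc1 sc2) (bowtie_mult sc1 sc2 m1 m2 \<omega>1 \<omega>2) I"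
    and ideal_in_kernel: "I \<subseteq> {p. bowtie_weight \<omega>1 \<omega>2 p = 0}"
begin

abbreviation mult :: "'a \<times> 'b \<Rightarrow> 'a \<times> 'b \<Rightarrow> 'a \<times> 'b"
  where "mult \<equiv> bowtie_mult sc1 sc2 m1 m2 \<omega>1 \<omega>2"

abbreviation kernel :: "('a \<times> 'b) set"
  where "kernel \<equiv> {p. bowtie_weight \<omega>1 \<omega>2 p = 0}"

lemma module1: "module sc1" and module2: "module sc2"
  using baric1 baric2 nonassoc_algebra_module unfolding baric_algebra_def by blast+

lemmas mult_zero1 = nonassoc_algebra_mult_zero[OF baric1[unfolded baric_algebra_def, THEN conjunct1]]
   and mult_zero2 = nonassoc_algebra_mult_zero[OF baric2[unfolded baric_algebra_def, THEN conjunct1]]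

lemma weight_zero1: "\<omega>1 0 = 0"
  using baric_weight_diff[OF baric1, of 0 0] by simp

lemma weight_scale1: "\<omega>1 (sc1 c x) = c * \<omega>1 x" and weight_scale2: "\<omega>2 (sc2 c y) = c * \<omega>2 y"
  using baric1 baric2 unfolding baric_algebra_def by blast+

lemma ideal_add: "p \<in> I \<Longrightarrow> q \<in> I \<Longrightarrow> p + q \<in> I"
  and ideal_scale: "p \<in> I \<Longrightarrow> bowtie_scale sc1 sc2 c p \<in> I"
  and ideal_mult_left: "p \<in> I \<Longrightarrow> mult q p \<in> I"
  and ideal_mult_right: "p \<in> I \<Longrightarrow> mult p q \<in> I"
  using ideal unfolding two_sided_ideal_def by blast+

lemma ideal_diff: "p \<in> I \<Longrightarrow> q \<in> I \<Longrightarrow> p - q \<in> I"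
  by (rule two_sided_ideal_diff[OF ideal])
     (simp add: bowtie_scale_def module.scale_minus_left[OF module1]
        module.scale_minus_left[OF module2] module.scale_one[OF module1]
        module.scale_one[OF module2] prod_eq_iff)

lemma in_kernel: "(x1, x2) \<in> I \<Longrightarrow> \<omega>1 x1 + \<omega>2 x2 = 0"
  using ideal_in_kernel unfolding bowtie_weight_def by auto

lemma partner_weight: "(a1, a2) \<in> I \<Longrightarrow> \<omega>1 a1 = 1 \<Longrightarrow> \<omega>2 a2 = -1"
  using in_kernel[of a1 a2] by (simp add: eq_neg_iff_add_eq_0 add.commute)

text \<open>If \<open>I\<close> contains an element whose first component has weight 1, then
  \<open>I\<close> contains \<open>0 \<times> Ker \<omega>2\<close>: the two products of \<open>(0, c)\<close> with that element
  differ exactly by \<open>(0, c)\<close> when \<open>A2\<close> is commutative.\<close>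
lemma right_kernel_in_ideal:
  assumes comm2: "commutative_alg m2"
    and unit: "(a1, a2) \<in> I" "\<omega>1 a1 = 1" and c: "\<omega>2 c = 0"
  shows "(0, c) \<in> I"
proof -
  have "mult (a1, a2) (0, c) \<in> I" using ideal_mult_right[OF unit(1)] .
  then have left: "(0, m2 a2 c) \<in> I"
    by (simp add: bowtie_mult_def c weight_zero1 mult_zero1 module.scale_zero_left[OF module1]
        module.scale_zero_left[OF module2])
  have "mult (0, c) (a1, a2) \<in> I" using ideal_mult_left[OF unit(1)] .
  then have right: "(0, m2 c a2 + c) \<in> I"
    by (simp add: bowtie_mult_def unit(2) mult_zero1 module.scale_zero_right[OF module1]
        module.scale_one[OF module2])
  have "(0, m2 c a2 + c) - (0, m2 a2 c) \<in> I" using ideal_diff[OF right left] .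
  moreover have "m2 c a2 = m2 a2 c" using comm2 unfolding commutative_alg_def by blast
  ultimately show ?thesis by simp
qed

text \<open>Symmetrically, \<open>I\<close> contains \<open>Ker \<omega>1 \<times> 0\<close> provided \<open>I\<close> projects onto
  \<open>A1\<close>: a preimage \<open>(c, d)\<close> of \<open>c\<close> has \<open>\<omega>2 d = 0\<close>, which kills the twist term.\<close>
lemma left_kernel_in_ideal:
  assumes comm1: "commutative_alg m1" and onto: "proj1 I = UNIV"
    and unit: "(a1, a2) \<in> I" "\<omega>1 a1 = 1" and c: "\<omega>1 c = 0"
  shows "(c, 0) \<in> I"
proof -
  obtain d where d_in: "(c, d) \<in> I" using onto unfolding proj1_def by blast
  have d: "\<omega>2 d = 0" using in_kernel[OF d_in] c by simp
  have a2: "\<omega>2 a2 = -1" using partner_weight[OF unit] .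
  have "mult (a1, 0) (c, d) \<in> I" using ideal_mult_left[OF d_in] .
  then have left: "(m1 a1 c, 0) \<in> I"
    by (simp add: bowtie_mult_def d c mult_zero2 module.scale_zero_left[OF module1]
        module.scale_zero_right[OF module2])
  have "mult (c, 0) (a1, a2) \<in> I" using ideal_mult_left[OF unit(1)] .
  then have right: "(m1 c a1 - c, 0) \<in> I"
    by (simp add: bowtie_mult_def a2 mult_zero2 module.scale_minus_left[OF module1]
        module.scale_one[OF module1] module.scale_zero_right[OF module2])
  have "(m1 a1 c, 0) - (m1 c a1 - c, 0) \<in> I" using ideal_diff[OF left right] .
  moreover have "m1 c a1 = m1 a1 c" using comm1 unfolding commutative_alg_def by blast
  ultimately show ?thesis by simp
qed

text \<open>The kernel of the product weight is spanned by one element of weight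
  \<open>(1, -1)\<close> together with \<open>Ker \<omega>1 \<times> 0\<close> and \<open>0 \<times> Ker \<omega>2\<close>; so an ideal
  containing these pieces contains the whole kernel.\<close>
lemma kernel_in_ideal:
  assumes unit: "(a1, a2) \<in> I" "\<omega>1 a1 = 1"
    and left: "\<And>c. \<omega>1 c = 0 \<Longrightarrow> (c, 0) \<in> I"
    and right: "\<And>c. \<omega>2 c = 0 \<Longrightarrow> (0, c) \<in> I"
  shows "kernel \<subseteq> I"
proof
  fix p assume "p \<in> kernel"
  then obtain x1 x2 where p: "p = (x1, x2)" and w: "\<omega>1 x1 + \<omega>2 x2 = 0"
    unfolding bowtie_weight_def by (cases p) auto
  define k where "k = \<omega>1 x1"
  have a2: "\<omega>2 a2 = -1" using partner_weight[OF unit] .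
  have w1: "\<omega>1 (x1 - sc1 k a1) = 0"
    by (simp add: baric_weight_diff[OF baric1] weight_scale1 unit(2) k_def)
  have w2: "\<omega>2 (x2 - sc2 k a2) = 0"
    using w by (simp add: baric_weight_diff[OF baric2] weight_scale2 a2 k_def eq_neg_iff_add_eq_0 add.commute)
  have "bowtie_scale sc1 sc2 k (a1, a2) + (x1 - sc1 k a1, 0) + (0, x2 - sc2 k a2) \<in> I"
    by (intro ideal_add ideal_scale unit(1) left right w1 w2)
  then show "p \<in> I" by (simp add: bowtie_scale_def p)
qed

lemma proj1_kernel: "proj1 kernel = UNIV"
proof -
  have "\<exists>x2. (x1, x2) \<in> kernel" for x1
  proof -
    obtain x2 where "\<omega>2 x2 = - \<omega>1 x1" using baric_weight_surj[OF baric2] .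
    then have "\<omega>1 x1 + \<omega>2 x2 = 0" by simp
    then show ?thesis by (auto simp: bowtie_weight_def)
  qed
  then show ?thesis unfolding proj1_def by blast
qed

end

theorem proposition5p3:
  fixes sc1 :: "'k::field \<Rightarrow> 'a::ab_group_add \<Rightarrow> 'a"
    and sc2 :: "'k \<Rightarrow> 'b::ab_group_add \<Rightarrow> 'b"
    and m1 :: "'a \<Rightarrow> 'a \<Rightarrow> 'a" and m2 :: "'b \<Rightarrow> 'b \<Rightarrow> 'b"
    and \<omega>1 :: "'a \<Rightarrow> 'k" and \<omega>2 :: "'b \<Rightarrow> 'k"
    and I :: "('a \<times> 'b) set"
  assumes "baric_algebra sc1 m1 \<omega>1" and "commutative_alg m1"
    and "baric_algebra sc2 m2 \<omega>2" and "commutative_alg m2"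
    and "two_sided_ideal (bowtie_scale sc1 sc2) (bowtie_mult sc1 sc2 m1 m2 \<omega>1 \<omega>2) I"
    and "I \<subseteq> {p. bowtie_weight \<omega>1 \<omega>2 p = 0}"
  shows "proj1 I = UNIV \<longleftrightarrow> I = {p. bowtie_weight \<omega>1 \<omega>2 p = 0}"
proof -
  interpret bowtie_ideal sc1 sc2 m1 m2 \<omega>1 \<omega>2 I
    using assms(1,3,5,6) by unfold_locales
  have "kernel \<subseteq> I" if onto: "proj1 I = UNIV"
  proof -
    obtain a1 where a1: "\<omega>1 a1 = 1" using baric_weight_surj[OF assms(1)] .
    obtain a2 where unit: "(a1, a2) \<in> I" using onto unfolding proj1_def by blast
    show ?thesis
      using kernel_in_ideal[OF unit a1] left_kernel_in_ideal[OF assms(2) onto unit a1]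
        right_kernel_in_ideal[OF assms(4) unit a1] by blast
  qed
  then show ?thesis using assms(6) proj1_kernel by blast
qed

end
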